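(* Let $B_J\in\mathbb R^{n\times n}$ satisfy $B_J\ge O$ elementwise and let $\mathcal B=(B_1,\dots,B_d)$ be a splitting of $B_J$. Assume $\lambda:=\rho(T(\mathcal B))>0$. Then $T(\mathcal B)$ has a nonnegative eigenvector $[\alpha_1^T,\dots,\alpha_d^T]^T$ (with $\alpha_p\in\mathbb R^n$) for the eigenvalue $\lambda$ such that, elementwise, $0\le\lambda\alpha_1\le\alpha_d\le\alpha_{d-1}\le\cdots\le\alpha_2\le\alpha_1$ if $\lambda\le1$, and $0\le\alpha_1\le\alpha_2\le\cdots\le\alpha_{d-1}\le\alpha_d\le\lambda\alpha_1$ if $\lambda\ge1$.
   Context: For $B\in\mathbb R^{n\times n}$, a splitting of $B$ of order $d\ge1$ is an ordered $d$-tuple $\mathcal B=(B_1,\dots,B_d)$ of real $n\times n$ matrices with $B_p\neq O$ for all $p$, $\sum_{p=1}^d B_p=B$, and $B_p\circ B_q=O$ (Hadamard product) for $p\ne q$. The iteration matrix of $\mathcal B$ is the $dn\times dn$ matrix $T(\mathcal B)=(I_{dn}-\mathcal L)^{-1}\mathcal U$, where $\mathcal L,\mathcal U$ are $d\times d$ block matrices with $n\times n$ blocks, $\mathcal L_{ij}=B_j$ if $i>j$ and $O$ otherwise, $\mathcal U_{ij}=B_j$ if $i\le j$ and $O$ otherwise. $\rho$ denotes spectral radius; inequalities between vectors/matrices are elementwise. *)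

theory Defs
  imports "Jordan_Normal_Form.Spectral_Radius"
begin

definition is_splitting :: "nat \<Rightarrow> real mat \<Rightarrow> real mat list \<Rightarrow> bool" where
  "is_splitting n B Bs \<longleftrightarrow>
     length Bs \<ge> 1 \<and>
     (\<forall>p < length Bs. Bs ! p \<in> carrier_mat n n \<and> Bs ! p \<noteq> 0\<^sub>m n n) \<and>
     B = foldr (+) Bs (0\<^sub>m n n) \<and>
     (\<forall>p < length Bs. \<forall>q < length Bs. p \<noteq> q \<longrightarrow>
        (\<forall>i < n. \<forall>j < n. (Bs ! p) $$ (i, j) * (Bs ! q) $$ (i, j) = 0))"

text \<open>Block lower part L: block (i,j) is B_j if i > j, else O (blocks 0-indexed).\<close>
definition blockL :: "nat \<Rightarrow> real mat list \<Rightarrow> real mat" where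
  "blockL n Bs = mat (length Bs * n) (length Bs * n)
     (\<lambda>(r, c). if r div n > c div n then (Bs ! (c div n)) $$ (r mod n, c mod n) else 0)"

text \<open>Block upper part U: block (i,j) is B_j if i \<le> j, else O.\<close>
definition blockU :: "nat \<Rightarrow> real mat list \<Rightarrow> real mat" where
  "blockU n Bs = mat (length Bs * n) (length Bs * n)
     (\<lambda>(r, c). if r div n \<le> c div n then (Bs ! (c div n)) $$ (r mod n, c mod n) else 0)"

definition inv_mat :: "real mat \<Rightarrow> real mat" where
  "inv_mat M = (THE N. N \<in> carrier_mat (dim_row M) (dim_row M) \<and>
                   M * N = 1\<^sub>m (dim_row M) \<and> N * M = 1\<^sub>m (dim_row M))"

definition iter_mat :: "nat \<Rightarrow> real mat list \<Rightarrow> real mat" where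
  "iter_mat n Bs = inv_mat (1\<^sub>m (length Bs * n) - blockL n Bs) * blockU n Bs"

definition rho :: "real mat \<Rightarrow> real" where
  "rho M = spectral_radius (map_mat complex_of_real M)"

end

theory Submission
  imports Defs
begin

text \<open>
  The iteration matrix T = (I - L)^-1 U is nonnegative, since L is nonnegative and strictly
  block lower triangular. A weak Perron--Frobenius argument then gives a nonnegative eigenvector
  for \<lambda> = \<rho>(T): for an eigenvector z with eigenvalue of modulus \<lambda>, the vector x = |z| satisfies
  T x \<ge> \<lambda> x; as T^k grows no faster than r^k for every r > \<lambda>, suitably chosen normalised
  iterates T^k x are approximate eigenvectors for \<lambda>, and any limit point is an eigenvector.

  Writing W_q = B_q \<alpha>_q \<ge> 0, the equation U v = \<lambda> (I - L) v says that \<lambda> \<alpha>_p is the sum of the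
  W_q with q \<ge> p plus \<lambda> times the sum of the W_q with q < p. Hence
  \<lambda> (\<alpha>_(p+1) - \<alpha>_p) = (\<lambda> - 1) W_p and \<lambda> \<alpha>_d - \<lambda>^2 \<alpha>_1 = (1 - \<lambda>) W_d, so the sign of \<lambda> - 1
  orders the blocks.
\<close>

lemma mult_mat_vec_index_sum:
  assumes "A \<in> carrier_mat nr nc" "v \<in> carrier_vec nc" "i < nr"
  shows "(A *\<^sub>v v) $ i = (\<Sum>j<nc. A $$ (i,j) * v $ j)"
  using assms by (auto simp: scalar_prod_def lessThan_atLeast0 intro!: sum.cong)

lemma mult_mat_index_sum:
  assumes "A \<in> carrier_mat nr n" "B \<in> carrier_mat n nc" "i < nr" "j < nc"
  shows "(A * B) $$ (i,j) = (\<Sum>k<n. A $$ (i,k) * B $$ (k,j))"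
  using assms by (auto simp: scalar_prod_def lessThan_atLeast0 intro!: sum.cong)

lemma pow_mat_Suc_left:
  assumes "A \<in> carrier_mat n n"
  shows "A ^\<^sub>m Suc k = A * A ^\<^sub>m k"
proof (induction k)
  case (Suc k)
  have "A ^\<^sub>m Suc (Suc k) = (A * A ^\<^sub>m k) * A" using Suc by simp
  also have "\<dots> = A * (A ^\<^sub>m k * A)"
    using assms by (intro assoc_mult_mat[of _ n n _ n _ n]) auto
  finally show ?case by simp
qed (use assms in simp)

lemma pow_smult_mat:
  fixes c :: "'a :: comm_semiring_1"
  assumes A: "A \<in> carrier_mat n n"
  shows "(c \<cdot>\<^sub>m A) ^\<^sub>m k = c ^ k \<cdot>\<^sub>m A ^\<^sub>m k"
proof (induction k)
  case (Suc k)
  have "(c \<cdot>\<^sub>m A) ^\<^sub>m Suc k = c ^ k \<cdot>\<^sub>m (A ^\<^sub>m k * (c \<cdot>\<^sub>m A))"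
    using Suc A by (simp add: mult_smult_assoc_mat[of _ n n _ n])
  also have "\<dots> = c ^ Suc k \<cdot>\<^sub>m A ^\<^sub>m Suc k"
    using A by (intro eq_matI) (auto simp: mult_smult_distrib[of _ n n _ n] ac_simps)
  finally show ?case .
qed (use A in auto)

lemma eigenvalue_smult_mat:
  fixes c :: "'a :: field"
  assumes A: "A \<in> carrier_mat n n" and c: "c \<noteq> 0" and ev: "eigenvalue (c \<cdot>\<^sub>m A) \<mu>"
  shows "eigenvalue A (\<mu> / c)"
proof -
  obtain v where v: "v \<in> carrier_vec n" "v \<noteq> 0\<^sub>v n" and v_ev: "(c \<cdot>\<^sub>m A) *\<^sub>v v = \<mu> \<cdot>\<^sub>v v"
    using ev A by (auto simp: eigenvalue_def eigenvector_def)
  have "A *\<^sub>v v = (\<mu> / c) \<cdot>\<^sub>v v"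
  proof (rule eq_vecI)
    fix i assume "i < dim_vec ((\<mu> / c) \<cdot>\<^sub>v v)"
    then have i: "i < n" using v by simp
    have "c * (A *\<^sub>v v) $ i = \<mu> * v $ i"
      using arg_cong[OF v_ev, of "\<lambda>w. w $ i"] A v i by simp
    then show "(A *\<^sub>v v) $ i = ((\<mu> / c) \<cdot>\<^sub>v v) $ i"
      using c i v by (simp add: field_simps)
  qed (use A v in simp)
  then show ?thesis using A v by (auto simp: eigenvalue_def eigenvector_def)
qed

lemma rho_nonneg:
  assumes "A \<in> carrier_mat n n" and "0 < n"
  shows "0 \<le> rho A"
  using spectral_radius_mem_max(1)[of "map_mat complex_of_real A" n] assms by (auto simp: rho_def)

lemma spectral_radius_scaled_less_1:
  fixes A :: "real mat"
  assumes A: "A \<in> carrier_mat n n" and n: "0 < n" and r: "rho A < r"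
  shows "spectral_radius (complex_of_real (1 / r) \<cdot>\<^sub>m map_mat complex_of_real A) < 1"
proof -
  define CA where "CA = map_mat complex_of_real A"
  define C where "C = complex_of_real (1 / r) \<cdot>\<^sub>m CA"
  have CA: "CA \<in> carrier_mat n n" and C: "C \<in> carrier_mat n n" using A by (simp_all add: CA_def C_def)
  have r_pos: "0 < r" using rho_nonneg[OF A n] r by linarith
  have "cmod \<mu> < 1" if "\<mu> \<in> spectrum C" for \<mu>
  proof -
    have "eigenvalue (complex_of_real (1 / r) \<cdot>\<^sub>m CA) \<mu>"
      using that by (simp add: spectrum_def C_def)
    then have "eigenvalue CA (\<mu> / complex_of_real (1 / r))"
      by (rule eigenvalue_smult_mat[OF CA, rotated]) (use r_pos in simp)
    then have "cmod (\<mu> / complex_of_real (1 / r)) \<le> rho A"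
      unfolding rho_def CA_def[symmetric]
      by (intro spectral_radius_mem_max(2)[OF CA n]) (simp add: spectrum_def)
    then have "cmod \<mu> * r \<le> rho A" using r_pos by (simp add: norm_mult)
    then have "cmod \<mu> * r < 1 * r" using r by simp
    then show ?thesis by (rule mult_right_less_imp_less) (use r_pos in simp)
  qed
  then show ?thesis
    using spectral_radius_mem_max(1)[OF C n] by (auto simp: C_def CA_def)
qed

lemma spectral_radius_pow_mat_bound:
  fixes A :: "real mat"
  assumes A: "A \<in> carrier_mat n n" and n: "n > 0" and r: "rho A < r"
  shows "\<exists>b. \<forall>k i j. i < n \<longrightarrow> j < n \<longrightarrow> \<bar>(A ^\<^sub>m k) $$ (i,j)\<bar> \<le> b * r ^ k"
proof -
  define C where "C = complex_of_real (1 / r) \<cdot>\<^sub>m map_mat complex_of_real A"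
  have CA: "map_mat complex_of_real A \<in> carrier_mat n n" using A by simp
  then have C: "C \<in> carrier_mat n n" by (simp add: C_def)
  have r_pos: "0 < r" using rho_nonneg[OF A n] r by linarith
  obtain b where b: "\<And>k. norm_bound (C ^\<^sub>m k) b"
    using spectral_radius_jnf_norm_bound_less_1_upper_triangular[OF C]
      spectral_radius_scaled_less_1[OF A n r] unfolding C_def by blast
  have "\<bar>(A ^\<^sub>m k) $$ (i,j)\<bar> \<le> b * r ^ k" if ij: "i < n" "j < n" for k i j
  proof -
    have "C ^\<^sub>m k = complex_of_real (1 / r) ^ k \<cdot>\<^sub>m map_mat complex_of_real (A ^\<^sub>m k)"
      unfolding C_def pow_smult_mat[OF CA] of_real_hom.mat_hom_pow[OF A] ..
    then have "norm ((C ^\<^sub>m k) $$ (i,j)) = \<bar>(A ^\<^sub>m k) $$ (i,j)\<bar> / r ^ k"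
      using ij A r_pos by (simp add: norm_mult norm_divide norm_power power_one_over)
    moreover have "norm ((C ^\<^sub>m k) $$ (i,j)) \<le> b" using b[of k] ij C unfolding norm_bound_def by auto
    ultimately show ?thesis using r_pos by (simp add: divide_le_eq)
  qed
  then show ?thesis by blast
qed

lemma nonneg_mat_subinvariant_vec:
  fixes A :: "real mat"
  assumes A: "A \<in> carrier_mat n n" and n: "n > 0"
    and A_nonneg: "\<And>i j. i < n \<Longrightarrow> j < n \<Longrightarrow> A $$ (i,j) \<ge> 0"
  shows "\<exists>x. x \<in> carrier_vec n \<and> x \<noteq> 0\<^sub>v n \<and> (\<forall>i<n. x $ i \<ge> 0) \<and>
           (\<forall>i<n. rho A * x $ i \<le> (A *\<^sub>v x) $ i)"
proof -
  define CA where "CA = map_mat complex_of_real A"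
  have CA: "CA \<in> carrier_mat n n" using A by (simp add: CA_def)
  obtain \<mu> where "\<mu> \<in> spectrum CA" and \<mu>: "cmod \<mu> = rho A"
    using spectral_radius_mem_max(1)[OF CA n] by (auto simp: rho_def CA_def)
  then obtain z where "eigenvector CA z \<mu>" by (auto simp: spectrum_def eigenvalue_def)
  then have z: "z \<in> carrier_vec n" "z \<noteq> 0\<^sub>v n" and z_ev: "CA *\<^sub>v z = \<mu> \<cdot>\<^sub>v z"
    using CA by (auto simp: eigenvector_def)
  define x where "x = map_vec cmod z"
  have x: "x \<in> carrier_vec n" using z by (simp add: x_def)
  have "x \<noteq> 0\<^sub>v n"
  proof
    assume "x = 0\<^sub>v n"
    then have "z = 0\<^sub>v n" using z by (intro eq_vecI) (auto simp: x_def vec_eq_iff)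
    then show False using z by simp
  qed
  moreover have "rho A * x $ i \<le> (A *\<^sub>v x) $ i" if i: "i < n" for i
  proof -
    have "rho A * x $ i = cmod ((CA *\<^sub>v z) $ i)"
      using z_ev z i by (simp add: x_def \<mu> norm_mult)
    also have "(CA *\<^sub>v z) $ i = (\<Sum>j<n. complex_of_real (A $$ (i,j)) * z $ j)"
      unfolding mult_mat_vec_index_sum[OF CA z(1) i] using A i by (auto simp: CA_def intro!: sum.cong)
    also have "cmod \<dots> \<le> (\<Sum>j<n. cmod (complex_of_real (A $$ (i,j)) * z $ j))" by (rule norm_sum)
    also have "\<dots> = (\<Sum>j<n. A $$ (i,j) * x $ j)"
      using A_nonneg i z by (intro sum.cong) (auto simp: norm_mult x_def)
    also have "\<dots> = (A *\<^sub>v x) $ i" using mult_mat_vec_index_sum[OF A x i] ..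
    finally show ?thesis .
  qed
  moreover have "x $ i \<ge> 0" if "i < n" for i using that z by (simp add: x_def)
  ultimately show ?thesis using x by blast
qed

lemma bounded_sequences_convergent_subseq:
  fixes f :: "nat \<Rightarrow> nat \<Rightarrow> real"
  assumes "\<And>j i. i < m \<Longrightarrow> \<bar>f j i\<bar> \<le> B"
  shows "\<exists>h. strict_mono h \<and> (\<forall>i<m. convergent (\<lambda>j. f (h j) i))"
  using assms
proof (induction m)
  case 0
  show ?case by (intro exI[of _ id]) (auto simp: strict_mono_def)
next
  case (Suc m)
  then obtain h where h: "strict_mono h" "\<forall>i<m. convergent (\<lambda>j. f (h j) i)" by auto
  obtain g where g: "strict_mono g" "monoseq (\<lambda>j. f (h (g j)) m)"
    using seq_monosub[of "\<lambda>j. f (h j) m"] by auto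
  have "Bseq (\<lambda>j. f (h (g j)) m)"
    using Suc.prems by (intro BseqI'[of _ B]) auto
  then have conv_m: "convergent (\<lambda>j. f (h (g j)) m)"
    using g(2) Bseq_monoseq_convergent by blast
  have "convergent (\<lambda>j. f (h (g j)) i)" if i: "i < Suc m" for i
  proof (cases "i = m")
    case False
    then have "i < m" using i by simp
    then obtain l where "(\<lambda>j. f (h j) i) \<longlonglongrightarrow> l" using h(2) convergent_def by auto
    then have "(\<lambda>j. f (h (g j)) i) \<longlonglongrightarrow> l" using LIMSEQ_subseq_LIMSEQ[OF _ g(1)] by (auto simp: o_def)
    then show ?thesis by (auto simp: convergent_def)
  qed (use conv_m in simp)
  then show ?case using strict_mono_o[OF h(1) g(1)] by (intro exI[of _ "h \<circ> g"]) (simp add: o_def)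
qed

lemma eigenvector_of_approx_eigenvectors:
  fixes M :: "real mat" and v :: "nat \<Rightarrow> real vec"
  assumes M: "M \<in> carrier_mat n n"
    and v: "\<And>j. v j \<in> carrier_vec n" and v_nonneg: "\<And>j i. i < n \<Longrightarrow> v j $ i \<ge> 0"
    and v_sum: "\<And>j. (\<Sum>i<n. v j $ i) = 1"
    and residual: "\<And>i. i < n \<Longrightarrow> (\<lambda>j. (M *\<^sub>v v j) $ i - \<rho> * v j $ i) \<longlonglongrightarrow> 0"
  shows "\<exists>u. u \<in> carrier_vec n \<and> u \<noteq> 0\<^sub>v n \<and> (\<forall>i<n. u $ i \<ge> 0) \<and> M *\<^sub>v u = \<rho> \<cdot>\<^sub>v u"
proof -
  have "\<bar>v j $ i\<bar> \<le> 1" if "i < n" for j i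
    using that v_nonneg member_le_sum[of i "{..<n}" "\<lambda>i. v j $ i"] by (simp add: v_sum)
  then obtain h where h: "strict_mono h" "\<forall>i<n. convergent (\<lambda>j. v (h j) $ i)"
    using bounded_sequences_convergent_subseq[of n "\<lambda>j i. v j $ i" 1] by auto
  define u where "u = vec n (\<lambda>i. lim (\<lambda>j. v (h j) $ i))"
  have u: "u \<in> carrier_vec n" by (simp add: u_def)
  have lim_u: "(\<lambda>j. v (h j) $ i) \<longlonglongrightarrow> u $ i" if "i < n" for i
    using h(2) that by (simp add: u_def convergent_LIMSEQ_iff)
  have "u $ i \<ge> 0" if "i < n" for i
    using LIMSEQ_le_const[OF lim_u[OF that]] v_nonneg that by blast
  moreover have "u \<noteq> 0\<^sub>v n"
  proof
    assume "u = 0\<^sub>v n"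
    have "(\<lambda>j. \<Sum>i<n. v (h j) $ i) \<longlonglongrightarrow> (\<Sum>i<n. u $ i)" by (intro tendsto_sum lim_u) simp
    then have "(\<lambda>j. 1) \<longlonglongrightarrow> (\<Sum>i<n. u $ i)" by (simp add: v_sum)
    then have "(\<Sum>i<n. u $ i) = 1" using LIMSEQ_unique[OF tendsto_const] by metis
    then show False using \<open>u = 0\<^sub>v n\<close> by simp
  qed
  moreover have "M *\<^sub>v u = \<rho> \<cdot>\<^sub>v u"
  proof (rule eq_vecI)
    fix i assume "i < dim_vec (\<rho> \<cdot>\<^sub>v u)"
    then have i: "i < n" using u by simp
    have "(\<lambda>j. (M *\<^sub>v v (h j)) $ i) \<longlonglongrightarrow> (M *\<^sub>v u) $ i"
      unfolding mult_mat_vec_index_sum[OF M v i] mult_mat_vec_index_sum[OF M u i]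
      by (intro tendsto_sum tendsto_mult_left lim_u) simp
    moreover have "(\<lambda>j. ((M *\<^sub>v v (h j)) $ i - \<rho> * v (h j) $ i) + \<rho> * v (h j) $ i) \<longlonglongrightarrow> 0 + \<rho> * u $ i"
      using LIMSEQ_subseq_LIMSEQ[OF residual[OF i] h(1)]
      by (intro tendsto_add tendsto_mult_left lim_u i) (simp add: o_def)
    ultimately have "(M *\<^sub>v u) $ i = \<rho> * u $ i" by (simp add: LIMSEQ_unique)
    then show "(M *\<^sub>v u) $ i = (\<rho> \<cdot>\<^sub>v u) $ i" using i u by simp
  qed (use M u in simp)
  ultimately show ?thesis using u by blast
qed

lemma growth_ratio_below:
  fixes s :: "nat \<Rightarrow> real"
  assumes s0: "s 0 > 0" and \<rho>: "\<rho> \<ge> 0" and \<delta>: "\<delta> > 0"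
    and growth: "\<And>r. r > \<rho> \<Longrightarrow> \<exists>C. \<forall>k. s k \<le> C * r ^ k"
  shows "\<exists>k. s (Suc k) < (\<rho> + \<delta>) * s k"
proof (rule ccontr)
  assume "\<not> ?thesis"
  then have step: "(\<rho> + \<delta>) * s k \<le> s (Suc k)" for k by (simp add: not_less)
  have lower: "(\<rho> + \<delta>) ^ k * s 0 \<le> s k" for k
  proof (induction k)
    case (Suc k)
    have "(\<rho> + \<delta>) ^ Suc k * s 0 \<le> (\<rho> + \<delta>) * s k"
      using Suc \<rho> \<delta> by (simp add: mult.assoc mult_left_mono)
    then show ?case using step[of k] by linarith
  qed simp
  define r where "r = \<rho> + \<delta> / 2"
  have r: "r > \<rho>" "r > 0" using \<rho> \<delta> by (auto simp: r_def)
  obtain C where C: "\<And>k. s k \<le> C * r ^ k" using growth[OF r(1)] by auto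
  have ratio: "(\<rho> + \<delta>) / r > 1" using \<rho> \<delta> r by (simp add: r_def field_simps)
  obtain k where k: "C / s 0 < ((\<rho> + \<delta>) / r) ^ k" using real_arch_pow[OF ratio] by auto
  have "((\<rho> + \<delta>) / r) ^ k * s 0 * r ^ k = (\<rho> + \<delta>) ^ k * s 0"
    using r by (simp add: power_divide)
  also have "\<dots> \<le> C * r ^ k" using lower[of k] C[of k] by linarith
  finally have "((\<rho> + \<delta>) / r) ^ k * s 0 \<le> C" using r by simp
  then show False using k s0 by (simp add: field_simps)
qed

lemma growth_ratio_limit_point:
  fixes s :: "nat \<Rightarrow> real"
  assumes s_pos: "\<And>k. s k > 0" and \<rho>: "\<rho> \<ge> 0" and s_sub: "\<And>k. \<rho> * s k \<le> s (Suc k)"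
    and growth: "\<And>r. r > \<rho> \<Longrightarrow> \<exists>C. \<forall>k. s k \<le> C * r ^ k"
  shows "\<exists>kj. (\<lambda>j. s (Suc (kj j)) / s (kj j)) \<longlonglongrightarrow> \<rho>"
proof -
  have "\<forall>j. \<exists>k. s (Suc k) < (\<rho> + 1 / real (Suc j)) * s k"
    using growth_ratio_below[where s = s, OF s_pos _ _ growth] \<rho> by simp
  then obtain kj where kj: "\<And>j. s (Suc (kj j)) < (\<rho> + 1 / real (Suc j)) * s (kj j)"
    by metis
  have "(\<lambda>j. s (Suc (kj j)) / s (kj j)) \<longlonglongrightarrow> \<rho>"
  proof (rule tendsto_sandwich[of "\<lambda>_. \<rho>" _ _ "\<lambda>j. \<rho> + 1 / real (Suc j)"])
    show "\<forall>\<^sub>F j in sequentially. \<rho> \<le> s (Suc (kj j)) / s (kj j)"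
      using s_sub s_pos by (simp add: pos_le_divide_eq)
    show "\<forall>\<^sub>F j in sequentially. s (Suc (kj j)) / s (kj j) \<le> \<rho> + 1 / real (Suc j)"
      using kj s_pos by (intro always_eventually allI) (simp add: pos_divide_le_eq less_imp_le)
    show "(\<lambda>j. \<rho> + 1 / real (Suc j)) \<longlonglongrightarrow> \<rho>"
      using tendsto_add[OF tendsto_const LIMSEQ_Suc[OF lim_const_over_n]] by simp
  qed simp
  then show ?thesis by blast
qed

lemma pow_mat_Suc_mult_vec:
  assumes M: "M \<in> carrier_mat n n" and x: "x \<in> carrier_vec n"
  shows "M ^\<^sub>m Suc k *\<^sub>v x = M *\<^sub>v (M ^\<^sub>m k *\<^sub>v x)"
  unfolding pow_mat_Suc_left[OF M] using M x by (intro assoc_mult_mat_vec) auto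

lemma nonneg_pow_mat_mult_vec:
  fixes M :: "real mat"
  assumes M: "M \<in> carrier_mat n n" and M_nonneg: "\<And>i j. i < n \<Longrightarrow> j < n \<Longrightarrow> M $$ (i,j) \<ge> 0"
    and x: "x \<in> carrier_vec n" and x_nonneg: "\<And>i. i < n \<Longrightarrow> x $ i \<ge> 0" and i: "i < n"
  shows "(M ^\<^sub>m k *\<^sub>v x) $ i \<ge> 0"
  using i
proof (induction k arbitrary: i)
  case (Suc k)
  have y: "M ^\<^sub>m k *\<^sub>v x \<in> carrier_vec n" using M x by (metis mult_mat_vec_carrier pow_carrier_mat)
  show ?case
    unfolding pow_mat_Suc_mult_vec[OF M x] mult_mat_vec_index_sum[OF M y Suc.prems]
    using Suc.IH M_nonneg Suc.prems by (intro sum_nonneg mult_nonneg_nonneg) auto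
qed (use M x x_nonneg in simp)

lemma subinvariant_pow_mat_mult_vec:
  fixes M :: "real mat"
  assumes M: "M \<in> carrier_mat n n" and M_nonneg: "\<And>i j. i < n \<Longrightarrow> j < n \<Longrightarrow> M $$ (i,j) \<ge> 0"
    and x: "x \<in> carrier_vec n" and x_sub: "\<And>i. i < n \<Longrightarrow> \<rho> * x $ i \<le> (M *\<^sub>v x) $ i"
    and i: "i < n"
  shows "\<rho> * (M ^\<^sub>m k *\<^sub>v x) $ i \<le> (M ^\<^sub>m Suc k *\<^sub>v x) $ i"
  using i
proof (induction k arbitrary: i)
  case (Suc k)
  let ?y = "\<lambda>k. M ^\<^sub>m k *\<^sub>v x"
  have y: "?y k \<in> carrier_vec n" "?y (Suc k) \<in> carrier_vec n"
    using M x by (metis mult_mat_vec_carrier pow_carrier_mat)+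
  have "\<rho> * ?y (Suc k) $ i = (\<Sum>l<n. M $$ (i,l) * (\<rho> * ?y k $ l))"
    unfolding pow_mat_Suc_mult_vec[OF M x, of k] mult_mat_vec_index_sum[OF M y(1) Suc.prems]
    by (simp add: sum_distrib_left ac_simps)
  also have "\<dots> \<le> (\<Sum>l<n. M $$ (i,l) * ?y (Suc k) $ l)"
    using Suc.IH M_nonneg Suc.prems by (intro sum_mono mult_left_mono) auto
  also have "\<dots> = ?y (Suc (Suc k)) $ i"
    unfolding pow_mat_Suc_mult_vec[OF M x, of "Suc k"] mult_mat_vec_index_sum[OF M y(2) Suc.prems] ..
  finally show ?case .
qed (use M x x_sub in simp)

lemma nonneg_vec_sum_pos:
  fixes x :: "real vec"
  assumes x: "x \<in> carrier_vec n" "x \<noteq> 0\<^sub>v n" and x_nonneg: "\<And>i. i < n \<Longrightarrow> x $ i \<ge> 0"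
  shows "(\<Sum>i<n. x $ i) > 0"
proof -
  obtain i where i: "i < n" "x $ i \<noteq> 0"
    using x by (metis carrier_vecD eq_vecI index_zero_vec(1,2))
  then have "0 < x $ i" using x_nonneg[of i] by simp
  also have "x $ i \<le> (\<Sum>i<n. x $ i)" using i x_nonneg by (intro member_le_sum) auto
  finally show ?thesis .
qed

lemma sum_pow_mat_mult_vec_le:
  fixes M :: "real mat"
  assumes M: "M \<in> carrier_mat n n" and x: "x \<in> carrier_vec n" and x_nonneg: "\<And>i. i < n \<Longrightarrow> x $ i \<ge> 0"
    and bound: "\<And>i j. i < n \<Longrightarrow> j < n \<Longrightarrow> (M ^\<^sub>m k) $$ (i,j) \<le> c"
  shows "(\<Sum>i<n. (M ^\<^sub>m k *\<^sub>v x) $ i) \<le> real n * c * (\<Sum>j<n. x $ j)"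
proof -
  have "(M ^\<^sub>m k *\<^sub>v x) $ i \<le> (\<Sum>j<n. c * x $ j)" if i: "i < n" for i
    unfolding mult_mat_vec_index_sum[OF pow_carrier_mat[OF M] x i]
    using bound i x_nonneg by (intro sum_mono mult_right_mono) auto
  then have "(\<Sum>i<n. (M ^\<^sub>m k *\<^sub>v x) $ i) \<le> (\<Sum>i<n. \<Sum>j<n. c * x $ j)" by (intro sum_mono) simp
  then show ?thesis by (simp add: sum_distrib_left mult.assoc)
qed

lemma normalise_nonneg_vec:
  fixes y :: "real vec"
  assumes y: "y \<in> carrier_vec n" and y_nonneg: "\<forall>i<n. y $ i \<ge> 0"
    and s: "(\<Sum>i<n. y $ i) > 0"
  defines "v \<equiv> (1 / (\<Sum>i<n. y $ i)) \<cdot>\<^sub>v y"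
  shows "v \<in> carrier_vec n" and "\<forall>i<n. v $ i \<ge> 0" and "(\<Sum>i<n. v $ i) = 1"
proof -
  show "v \<in> carrier_vec n" using y by (simp add: v_def)
  show "\<forall>i<n. v $ i \<ge> 0" using y y_nonneg s by (simp add: v_def)
  have "(\<Sum>i<n. v $ i) = (\<Sum>i<n. y $ i) / (\<Sum>i<n. y $ i)"
    unfolding sum_divide_distrib using y by (intro sum.cong) (auto simp: v_def)
  then show "(\<Sum>i<n. v $ i) = 1" using s by simp
qed

lemma normalised_residual_bound:
  fixes M :: "real mat"
  assumes M: "M \<in> carrier_mat n n" and y: "y \<in> carrier_vec n"
    and y_sub: "\<forall>l<n. \<rho> * y $ l \<le> (M *\<^sub>v y) $ l"
    and s: "(\<Sum>l<n. y $ l) > 0" and i: "i < n"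
  defines "v \<equiv> (1 / (\<Sum>l<n. y $ l)) \<cdot>\<^sub>v y"
  shows "0 \<le> (M *\<^sub>v v) $ i - \<rho> * v $ i"
    and "(M *\<^sub>v v) $ i - \<rho> * v $ i \<le> (\<Sum>l<n. (M *\<^sub>v y) $ l) / (\<Sum>l<n. y $ l) - \<rho>"
proof -
  let ?s = "\<Sum>l<n. y $ l"
  have v: "(M *\<^sub>v v) $ i - \<rho> * v $ i = ((M *\<^sub>v y) $ i - \<rho> * y $ i) / ?s"
    unfolding v_def mult_mat_vec[OF M y] using M y i by (simp add: diff_divide_distrib)
  then show "0 \<le> (M *\<^sub>v v) $ i - \<rho> * v $ i" using y_sub i s by simp
  have "(M *\<^sub>v y) $ i - \<rho> * y $ i \<le> (\<Sum>l<n. (M *\<^sub>v y) $ l - \<rho> * y $ l)"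
    using i y_sub by (intro member_le_sum) (auto simp: algebra_simps)
  also have "\<dots> = (\<Sum>l<n. (M *\<^sub>v y) $ l) - \<rho> * ?s" by (simp add: sum_subtractf sum_distrib_left)
  finally have "((M *\<^sub>v y) $ i - \<rho> * y $ i) / ?s \<le> ((\<Sum>l<n. (M *\<^sub>v y) $ l) - \<rho> * ?s) / ?s"
    using s by (intro divide_right_mono) auto
  then show "(M *\<^sub>v v) $ i - \<rho> * v $ i \<le> (\<Sum>l<n. (M *\<^sub>v y) $ l) / ?s - \<rho>"
    unfolding v using s by (simp add: diff_divide_distrib)
qed

lemma nonneg_eigenvector_of_subinvariant_vec:
  fixes M :: "real mat"
  assumes M: "M \<in> carrier_mat n n" and M_nonneg: "\<And>i j. i < n \<Longrightarrow> j < n \<Longrightarrow> M $$ (i,j) \<ge> 0"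
    and \<rho>: "\<rho> > 0"
    and x: "x \<in> carrier_vec n" "x \<noteq> 0\<^sub>v n" and x_nonneg: "\<And>i. i < n \<Longrightarrow> x $ i \<ge> 0"
    and x_sub: "\<And>i. i < n \<Longrightarrow> \<rho> * x $ i \<le> (M *\<^sub>v x) $ i"
    and growth: "\<And>r. r > \<rho> \<Longrightarrow> \<exists>b. \<forall>k i j. i < n \<longrightarrow> j < n \<longrightarrow> (M ^\<^sub>m k) $$ (i,j) \<le> b * r ^ k"
  shows "\<exists>u. u \<in> carrier_vec n \<and> u \<noteq> 0\<^sub>v n \<and> (\<forall>i<n. u $ i \<ge> 0) \<and> M *\<^sub>v u = \<rho> \<cdot>\<^sub>v u"
proof -
  define y where "y k = M ^\<^sub>m k *\<^sub>v x" for k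
  define s where "s k = (\<Sum>i<n. y k $ i)" for k
  have y: "y k \<in> carrier_vec n" for k
    unfolding y_def using M x by (metis mult_mat_vec_carrier pow_carrier_mat)
  have y_Suc: "M *\<^sub>v y k = y (Suc k)" for k
    unfolding y_def by (rule pow_mat_Suc_mult_vec[OF M x(1), symmetric])
  have y_nonneg: "y k $ i \<ge> 0" if "i < n" for k i
    unfolding y_def by (rule nonneg_pow_mat_mult_vec[OF M M_nonneg x(1) x_nonneg that])
  have y_sub: "\<rho> * y k $ i \<le> (M *\<^sub>v y k) $ i" if "i < n" for k i
    unfolding y_Suc unfolding y_def by (rule subinvariant_pow_mat_mult_vec[OF M M_nonneg x(1) x_sub that])
  have s0: "s 0 = (\<Sum>i<n. x $ i)" using M x by (simp add: s_def y_def)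
  have "s 0 > 0" unfolding s0 by (rule nonneg_vec_sum_pos[OF x x_nonneg])
  have s_sub: "\<rho> * s k \<le> s (Suc k)" for k
    unfolding s_def sum_distrib_left y_Suc[symmetric] by (intro sum_mono y_sub) simp
  have s_pos: "s k > 0" for k
  proof (induction k)
    case (Suc k)
    show ?case using mult_pos_pos[OF \<rho> Suc] s_sub[of k] by linarith
  qed (fact \<open>s 0 > 0\<close>)
  have s_growth: "\<exists>C. \<forall>k. s k \<le> C * r ^ k" if r: "r > \<rho>" for r
  proof -
    obtain b where b: "\<And>k i j. i < n \<Longrightarrow> j < n \<Longrightarrow> (M ^\<^sub>m k) $$ (i,j) \<le> b * r ^ k"
      using growth[OF r] by auto
    have "s k \<le> real n * (b * r ^ k) * s 0" for k
      unfolding s_def[of k] s0 y_def by (intro sum_pow_mat_mult_vec_le[OF M x(1) x_nonneg] b)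
    then have "s k \<le> (real n * b * s 0) * r ^ k" for k by (simp add: algebra_simps)
    then show ?thesis by blast
  qed
  obtain kj where kj: "(\<lambda>j. s (Suc (kj j)) / s (kj j)) \<longlonglongrightarrow> \<rho>"
    using growth_ratio_limit_point[OF s_pos _ s_sub s_growth] \<rho> by auto
  define v where "v j = (1 / s (kj j)) \<cdot>\<^sub>v y (kj j)" for j
  have residual: "0 \<le> (M *\<^sub>v v j) $ i - \<rho> * v j $ i \<and>
      (M *\<^sub>v v j) $ i - \<rho> * v j $ i \<le> s (Suc (kj j)) / s (kj j) - \<rho>" if i: "i < n" for i j
  proof -
    have y_sub_k: "\<forall>l<n. \<rho> * y (kj j) $ l \<le> (M *\<^sub>v y (kj j)) $ l" using y_sub by blast
    have s_k: "(\<Sum>l<n. y (kj j) $ l) > 0" using s_pos[of "kj j"] by (simp add: s_def)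
    show ?thesis
      using normalised_residual_bound[OF M y y_sub_k s_k i, unfolded y_Suc, folded s_def]
      unfolding v_def by blast
  qed
  have "(\<lambda>j. (M *\<^sub>v v j) $ i - \<rho> * v j $ i) \<longlonglongrightarrow> 0" if i: "i < n" for i
    by (rule tendsto_sandwich[of "\<lambda>_. 0" _ _ "\<lambda>j. s (Suc (kj j)) / s (kj j) - \<rho>"])
      (use residual[OF i] tendsto_diff[OF kj tendsto_const, of \<rho>] in auto)
  moreover have "v j \<in> carrier_vec n \<and> (\<forall>i<n. v j $ i \<ge> 0) \<and> (\<Sum>i<n. v j $ i) = 1" for j
  proof -
    have "\<forall>i<n. y (kj j) $ i \<ge> 0" using y_nonneg by blast
    then show ?thesis
      using normalise_nonneg_vec[OF y _ s_pos[of "kj j", unfolded s_def]] unfolding v_def s_def by blast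
  qed
  ultimately show ?thesis
    by (intro eigenvector_of_approx_eigenvectors[where v = v and \<rho> = \<rho>] M) auto
qed

theorem nonneg_mat_perron_eigenvector:
  fixes A :: "real mat"
  assumes A: "A \<in> carrier_mat n n" and n: "n > 0"
    and A_nonneg: "\<And>i j. i < n \<Longrightarrow> j < n \<Longrightarrow> A $$ (i,j) \<ge> 0"
    and \<rho>: "rho A > 0"
  shows "\<exists>v. eigenvector A v (rho A) \<and> (\<forall>i<n. v $ i \<ge> 0)"
proof -
  obtain x where "x \<in> carrier_vec n" "x \<noteq> 0\<^sub>v n" "\<forall>i<n. x $ i \<ge> 0"
    "\<forall>i<n. rho A * x $ i \<le> (A *\<^sub>v x) $ i"
    using nonneg_mat_subinvariant_vec[OF A n A_nonneg] by blast
  moreover have "\<exists>b. \<forall>k i j. i < n \<longrightarrow> j < n \<longrightarrow> (A ^\<^sub>m k) $$ (i,j) \<le> b * r ^ k" if "r > rho A" for r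
    using spectral_radius_pow_mat_bound[OF A n that] by (meson abs_le_D1)
  ultimately obtain u where "u \<in> carrier_vec n" "u \<noteq> 0\<^sub>v n" "\<forall>i<n. u $ i \<ge> 0" "A *\<^sub>v u = rho A \<cdot>\<^sub>v u"
    using nonneg_eigenvector_of_subinvariant_vec[OF A A_nonneg \<rho>] by blast
  then show ?thesis using A by (auto simp: eigenvector_def)
qed

lemma sum_lessThan_mult_blocks:
  fixes d n :: nat
  shows "(\<Sum>c<d * n. f c) = (\<Sum>q<d. \<Sum>j<n. f (q * n + j))"
proof -
  have "(\<Sum>c\<in>{q * n..<q * n + n}. f c) = (\<Sum>j<n. f (q * n + j))" for q
    using sum.shift_bounds_nat_ivl[of f 0 "q * n" n] by (simp add: atLeast0LessThan add.commute)
  then show ?thesis by (simp add: sum.nat_group[symmetric])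
qed

lemma block_index_less:
  fixes p d i n :: nat
  assumes "p < d" "i < n"
  shows "p * n + i < d * n"
proof -
  have "p * n + i < Suc p * n" using assms by simp
  also have "\<dots> \<le> d * n" using assms by (intro mult_le_mono1) simp
  finally show ?thesis .
qed

lemma inv_mat_eqI:
  assumes A: "A \<in> carrier_mat n n" and B: "B \<in> carrier_mat n n"
    and "A * B = 1\<^sub>m n" "B * A = 1\<^sub>m n"
  shows "inv_mat A = B"
  unfolding inv_mat_def
proof (rule the_equality)
  fix X assume X: "X \<in> carrier_mat (dim_row A) (dim_row A) \<and> A * X = 1\<^sub>m (dim_row A) \<and> X * A = 1\<^sub>m (dim_row A)"
  then have "X = (B * A) * X" using A assms(4) by auto
  also have "\<dots> = B * (A * X)" using A B X by (intro assoc_mult_mat) auto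
  finally show "X = B" using A B X by simp
qed (use assms in simp)

lemma inv_mat_one_minus_strictly_lower:
  fixes L :: "real mat"
  assumes L: "L \<in> carrier_mat N N"
    and upper_zero: "\<And>r c. r < N \<Longrightarrow> c < N \<Longrightarrow> r \<le> c \<Longrightarrow> L $$ (r,c) = 0"
  shows "inv_mat (1\<^sub>m N - L) \<in> carrier_mat N N"
    and "(1\<^sub>m N - L) * inv_mat (1\<^sub>m N - L) = 1\<^sub>m N"
    and "inv_mat (1\<^sub>m N - L) * (1\<^sub>m N - L) = 1\<^sub>m N"
proof -
  have IL: "1\<^sub>m N - L \<in> carrier_mat N N" using L by (intro minus_carrier_mat) auto
  have "det (1\<^sub>m N - L) = prod_list (diag_mat (1\<^sub>m N - L))"
    using L upper_zero by (intro det_lower_triangular[OF _ IL]) auto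
  also have "diag_mat (1\<^sub>m N - L) = diag_mat (1\<^sub>m N)"
    using L upper_zero by (auto simp: diag_mat_def)
  finally have "det (1\<^sub>m N - L) \<noteq> 0" by simp
  then have "1\<^sub>m N - L \<in> Units (ring_mat TYPE(real) N undefined)"
    by (rule det_non_zero_imp_unit[OF IL])
  then obtain M where M: "M \<in> carrier_mat N N" "M * (1\<^sub>m N - L) = 1\<^sub>m N" "(1\<^sub>m N - L) * M = 1\<^sub>m N"
    by (auto simp: Units_def ring_mat_simps)
  then have "inv_mat (1\<^sub>m N - L) = M" by (intro inv_mat_eqI[OF IL])
  then show "inv_mat (1\<^sub>m N - L) \<in> carrier_mat N N"
    and "(1\<^sub>m N - L) * inv_mat (1\<^sub>m N - L) = 1\<^sub>m N"
    and "inv_mat (1\<^sub>m N - L) * (1\<^sub>m N - L) = 1\<^sub>m N"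
    using M by simp_all
qed

lemma inv_mat_one_minus_strictly_lower_nonneg:
  fixes L :: "real mat"
  assumes L: "L \<in> carrier_mat N N"
    and upper_zero: "\<And>r c. r < N \<Longrightarrow> c < N \<Longrightarrow> r \<le> c \<Longrightarrow> L $$ (r,c) = 0"
    and L_nonneg: "\<And>r c. r < N \<Longrightarrow> c < N \<Longrightarrow> L $$ (r,c) \<ge> 0"
    and rc: "r < N" "c < N"
  shows "inv_mat (1\<^sub>m N - L) $$ (r,c) \<ge> 0"
  using rc(1)
proof (induction r rule: less_induct)
  \<comment> \<open>M = I + L M with L strictly lower triangular, so row r of M only involves earlier rows.\<close>
  case (less r)
  note inv = inv_mat_one_minus_strictly_lower[OF L upper_zero]
  define M where "M = inv_mat (1\<^sub>m N - L)"
  have M: "M \<in> carrier_mat N N" using inv(1) by (simp add: M_def)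
  have IL: "1\<^sub>m N - L \<in> carrier_mat N N" using L by (intro minus_carrier_mat) auto
  have "(if r = c then 1 else 0) = ((1\<^sub>m N - L) * M) $$ (r,c)"
    using inv(2) less.prems rc(2) by (simp add: M_def)
  also have "\<dots> = (\<Sum>s<N. (if r = s then M $$ (s,c) else 0) - L $$ (r,s) * M $$ (s,c))"
    unfolding mult_mat_index_sum[OF IL M less.prems rc(2)]
    using less.prems L by (intro sum.cong) (auto simp: left_diff_distrib)
  also have "\<dots> = M $$ (r,c) - (\<Sum>s<N. L $$ (r,s) * M $$ (s,c))"
    using less.prems by (simp add: sum_subtractf)
  finally have "M $$ (r,c) = (if r = c then 1 else 0) + (\<Sum>s<N. L $$ (r,s) * M $$ (s,c))"
    by simp
  moreover have "L $$ (r,s) * M $$ (s,c) \<ge> 0" if "s < N" for s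
    using less.IH[of s] L_nonneg[OF less.prems that] upper_zero[OF less.prems that] that
    by (cases "s < r") (auto simp: M_def)
  then have "0 \<le> (\<Sum>s<N. L $$ (r,s) * M $$ (s,c))" by (intro sum_nonneg) simp
  ultimately show ?case by (simp add: M_def)
qed

lemma foldr_plus_mat_index:
  assumes "\<forall>A\<in>set As. A \<in> carrier_mat n n" "i < n" "j < n"
  shows "foldr (+) As (0\<^sub>m n n) $$ (i,j) = (\<Sum>p<length As. (As ! p) $$ (i,j))"
proof -
  have "foldr (+) As (0\<^sub>m n n) \<in> carrier_mat n n \<and>
        foldr (+) As (0\<^sub>m n n) $$ (i,j) = (\<Sum>p<length As. (As ! p) $$ (i,j))"
    using assms by (induction As) (auto simp del: sum.lessThan_Suc simp: sum.lessThan_Suc_shift)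
  then show ?thesis ..
qed

lemma splitting_dim_pos:
  assumes "is_splitting n B Bs"
  shows "0 < n"
proof (rule ccontr)
  assume "\<not> 0 < n"
  moreover have "0 < length Bs" "\<forall>p<length Bs. Bs ! p \<in> carrier_mat n n \<and> Bs ! p \<noteq> 0\<^sub>m n n"
    using assms by (auto simp: is_splitting_def)
  then have "Bs ! 0 \<in> carrier_mat n n" "Bs ! 0 \<noteq> 0\<^sub>m n n" by blast+
  moreover have "Bs ! 0 = 0\<^sub>m n n" if "n = 0"
    using \<open>Bs ! 0 \<in> carrier_mat n n\<close> that by (intro eq_matI) auto
  ultimately show False by simp
qed

lemma splitting_nonneg:
  assumes split: "is_splitting n B Bs" and B_nonneg: "\<forall>i<n. \<forall>j<n. B $$ (i,j) \<ge> 0"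
    and p: "p < length Bs" and ij: "i < n" "j < n"
  shows "(Bs ! p) $$ (i,j) \<ge> 0"
proof (cases "(Bs ! p) $$ (i,j) = 0")
  case False
  note spl = split[unfolded is_splitting_def]
  have "\<forall>A\<in>set Bs. A \<in> carrier_mat n n" using spl by (auto simp: in_set_conv_nth)
  then have "B $$ (i,j) = (Bs ! p) $$ (i,j) + (\<Sum>q\<in>{..<length Bs} - {p}. (Bs ! q) $$ (i,j))"
    using spl p ij by (simp add: foldr_plus_mat_index sum.remove)
  also have "(\<Sum>q\<in>{..<length Bs} - {p}. (Bs ! q) $$ (i,j)) = 0"
    using spl p ij False by (intro sum.neutral) fastforce
  finally have "B $$ (i,j) = (Bs ! p) $$ (i,j)" by simp
  then show ?thesis using B_nonneg ij by metis
qed simp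

lemma blockL_carrier: "blockL n Bs \<in> carrier_mat (length Bs * n) (length Bs * n)"
  by (simp add: blockL_def)

lemma blockU_carrier: "blockU n Bs \<in> carrier_mat (length Bs * n) (length Bs * n)"
  by (simp add: blockU_def)

lemma blockL_index:
  assumes "p < length Bs" "q < length Bs" "i < n" "j < n"
  shows "blockL n Bs $$ (p * n + i, q * n + j) = (if q < p then (Bs ! q) $$ (i,j) else 0)"
  using assms by (simp add: blockL_def block_index_less)

lemma blockU_index:
  assumes "p < length Bs" "q < length Bs" "i < n" "j < n"
  shows "blockU n Bs $$ (p * n + i, q * n + j) = (if p \<le> q then (Bs ! q) $$ (i,j) else 0)"
  using assms by (simp add: blockU_def block_index_less)

lemma blockL_upper_zero:
  assumes "r < length Bs * n" "c < length Bs * n" "r \<le> c"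
  shows "blockL n Bs $$ (r,c) = 0"
  using assms div_le_mono[OF assms(3), of n] by (simp add: blockL_def)

lemma blockL_blockU_nonneg:
  assumes Bs_nonneg: "\<And>q i j. q < length Bs \<Longrightarrow> i < n \<Longrightarrow> j < n \<Longrightarrow> (Bs ! q) $$ (i,j) \<ge> 0"
    and rc: "r < length Bs * n" "c < length Bs * n"
  shows "blockL n Bs $$ (r,c) \<ge> 0" and "blockU n Bs $$ (r,c) \<ge> 0"
proof -
  have "0 < n" using rc by (cases n) auto
  then have "c div n < length Bs" "c mod n < n" "r mod n < n"
    using rc by (auto simp: less_mult_imp_div_less)
  then show "blockL n Bs $$ (r,c) \<ge> 0" and "blockU n Bs $$ (r,c) \<ge> 0"
    using rc Bs_nonneg by (auto simp: blockL_def blockU_def)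
qed

text \<open>The i-th entry of B_q \<alpha>_q, where \<alpha>_q is the q-th block of length n of v (blocks counted from 0).\<close>
definition block_mult_vec :: "nat \<Rightarrow> real mat list \<Rightarrow> real vec \<Rightarrow> nat \<Rightarrow> nat \<Rightarrow> real" where
  "block_mult_vec n Bs v q i = (\<Sum>j<n. (Bs ! q) $$ (i,j) * v $ (q * n + j))"

lemma blockU_mult_vec_index:
  assumes v: "v \<in> carrier_vec (length Bs * n)" and p: "p < length Bs" and i: "i < n"
  shows "(blockU n Bs *\<^sub>v v) $ (p * n + i) =
           (\<Sum>q<length Bs. if p \<le> q then block_mult_vec n Bs v q i else 0)"
proof -
  have "(blockU n Bs *\<^sub>v v) $ (p * n + i) =
          (\<Sum>c<length Bs * n. blockU n Bs $$ (p * n + i, c) * v $ c)"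
    using mult_mat_vec_index_sum[OF blockU_carrier v block_index_less[OF p i]] .
  also have "\<dots> = (\<Sum>q<length Bs. \<Sum>j<n. blockU n Bs $$ (p * n + i, q * n + j) * v $ (q * n + j))"
    by (rule sum_lessThan_mult_blocks)
  also have "\<dots> = (\<Sum>q<length Bs. if p \<le> q then block_mult_vec n Bs v q i else 0)"
    using p i by (intro sum.cong refl) (simp add: blockU_index block_mult_vec_def)
  finally show ?thesis .
qed

lemma blockL_mult_vec_index:
  assumes v: "v \<in> carrier_vec (length Bs * n)" and p: "p < length Bs" and i: "i < n"
  shows "(blockL n Bs *\<^sub>v v) $ (p * n + i) =
           (\<Sum>q<length Bs. if q < p then block_mult_vec n Bs v q i else 0)"
proof -
  have "(blockL n Bs *\<^sub>v v) $ (p * n + i) =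
          (\<Sum>c<length Bs * n. blockL n Bs $$ (p * n + i, c) * v $ c)"
    using mult_mat_vec_index_sum[OF blockL_carrier v block_index_less[OF p i]] .
  also have "\<dots> = (\<Sum>q<length Bs. \<Sum>j<n. blockL n Bs $$ (p * n + i, q * n + j) * v $ (q * n + j))"
    by (rule sum_lessThan_mult_blocks)
  also have "\<dots> = (\<Sum>q<length Bs. if q < p then block_mult_vec n Bs v q i else 0)"
    using p i by (intro sum.cong refl) (simp add: blockL_index block_mult_vec_def)
  finally show ?thesis .
qed

lemma iter_mat_carrier: "iter_mat n Bs \<in> carrier_mat (length Bs * n) (length Bs * n)"
  unfolding iter_mat_def
  by (rule mult_carrier_mat[OF inv_mat_one_minus_strictly_lower(1)[OF blockL_carrier blockL_upper_zero]
        blockU_carrier])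

lemma one_minus_blockL_mult_iter_mat:
  "(1\<^sub>m (length Bs * n) - blockL n Bs) * iter_mat n Bs = blockU n Bs"
proof -
  let ?N = "length Bs * n"
  note L = blockL_carrier[of n Bs] and U = blockU_carrier[of n Bs]
  note inv = inv_mat_one_minus_strictly_lower[OF L blockL_upper_zero]
  have "(1\<^sub>m ?N - blockL n Bs) * iter_mat n Bs =
          ((1\<^sub>m ?N - blockL n Bs) * inv_mat (1\<^sub>m ?N - blockL n Bs)) * blockU n Bs"
    unfolding iter_mat_def using L U inv(1) by (intro assoc_mult_mat[symmetric]) auto
  then show ?thesis using inv(2) U by simp
qed

lemma iter_mat_nonneg:
  assumes Bs_nonneg: "\<And>q i j. q < length Bs \<Longrightarrow> i < n \<Longrightarrow> j < n \<Longrightarrow> (Bs ! q) $$ (i,j) \<ge> 0"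
    and rc: "r < length Bs * n" "c < length Bs * n"
  shows "iter_mat n Bs $$ (r,c) \<ge> 0"
proof -
  let ?N = "length Bs * n"
  note L = blockL_carrier[of n Bs] and U = blockU_carrier[of n Bs]
  note inv = inv_mat_one_minus_strictly_lower[OF L blockL_upper_zero]
  have "iter_mat n Bs $$ (r,c) =
          (\<Sum>s<?N. inv_mat (1\<^sub>m ?N - blockL n Bs) $$ (r,s) * blockU n Bs $$ (s,c))"
    unfolding iter_mat_def by (rule mult_mat_index_sum[OF inv(1) U rc])
  also have "\<dots> \<ge> 0"
    using rc by (intro sum_nonneg mult_nonneg_nonneg inv_mat_one_minus_strictly_lower_nonneg[OF L]
        blockL_upper_zero blockL_blockU_nonneg[OF Bs_nonneg]) auto
  finally show ?thesis .
qed

lemma iter_mat_eigen_blocks: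
  assumes ev: "iter_mat n Bs *\<^sub>v v = \<rho> \<cdot>\<^sub>v v" and v: "v \<in> carrier_vec (length Bs * n)"
    and p: "p < length Bs" and i: "i < n"
  shows "\<rho> * v $ (p * n + i) =
           (\<Sum>q<length Bs. (if p \<le> q then 1 else \<rho>) * block_mult_vec n Bs v q i)"
proof -
  let ?N = "length Bs * n" and ?r = "p * n + i" and ?W = "block_mult_vec n Bs v"
  note L = blockL_carrier[of n Bs]
  have r: "?r < ?N" using block_index_less[OF p i] .
  have "blockU n Bs *\<^sub>v v = (1\<^sub>m ?N - blockL n Bs) *\<^sub>v (iter_mat n Bs *\<^sub>v v)"
    unfolding one_minus_blockL_mult_iter_mat[symmetric] using L iter_mat_carrier v
    by (intro assoc_mult_mat_vec) auto
  also have "\<dots> = \<rho> \<cdot>\<^sub>v v - blockL n Bs *\<^sub>v (\<rho> \<cdot>\<^sub>v v)"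
    unfolding ev using L v by (subst minus_mult_distrib_mat_vec[OF _ L]) auto
  also have "blockL n Bs *\<^sub>v (\<rho> \<cdot>\<^sub>v v) = \<rho> \<cdot>\<^sub>v (blockL n Bs *\<^sub>v v)"
    by (rule mult_mat_vec[OF L v])
  finally have "(blockU n Bs *\<^sub>v v) $ ?r = \<rho> * v $ ?r - \<rho> * (blockL n Bs *\<^sub>v v) $ ?r"
    using L v r by simp
  then have "(\<Sum>q<length Bs. if p \<le> q then ?W q i else 0) =
               \<rho> * v $ ?r - \<rho> * (\<Sum>q<length Bs. if q < p then ?W q i else 0)"
    by (simp add: blockU_mult_vec_index[OF v p i] blockL_mult_vec_index[OF v p i])
  moreover have "(\<Sum>q<length Bs. (if p \<le> q then 1 else \<rho>) * ?W q i) =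
      (\<Sum>q<length Bs. if p \<le> q then ?W q i else 0) + \<rho> * (\<Sum>q<length Bs. if q < p then ?W q i else 0)"
    unfolding sum_distrib_left sum.distrib[symmetric] by (intro sum.cong) auto
  ultimately show ?thesis by simp
qed

lemma block_eigen_step:
  fixes \<alpha> W :: "nat \<Rightarrow> real"
  assumes eq: "\<And>p. p < d \<Longrightarrow> \<rho> * \<alpha> p = (\<Sum>q<d. (if p \<le> q then 1 else \<rho>) * W q)"
    and p: "p + 1 < d"
  shows "\<rho> * \<alpha> (p + 1) = \<rho> * \<alpha> p + (\<rho> - 1) * W p"
proof -
  have "(\<Sum>q<d. (if p + 1 \<le> q then 1 else \<rho>) * W q) - (\<Sum>q<d. (if p \<le> q then 1 else \<rho>) * W q) =
          (\<Sum>q<d. if q = p then (\<rho> - 1) * W q else 0)"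
    unfolding sum_subtractf[symmetric] by (intro sum.cong) (auto simp: algebra_simps)
  then show ?thesis using eq[of p] eq[of "p + 1"] p by simp
qed

lemma block_eigen_wrap:
  fixes \<alpha> W :: "nat \<Rightarrow> real"
  assumes eq: "\<And>p. p < d \<Longrightarrow> \<rho> * \<alpha> p = (\<Sum>q<d. (if p \<le> q then 1 else \<rho>) * W q)"
    and d: "0 < d"
  shows "\<rho> * \<alpha> (d - 1) = \<rho> * (\<rho> * \<alpha> 0) + (1 - \<rho>) * W (d - 1)"
proof -
  have "(\<Sum>q<d. (if d - 1 \<le> q then 1 else \<rho>) * W q) - (\<Sum>q<d. \<rho> * W q) =
          (\<Sum>q<d. if q = d - 1 then (1 - \<rho>) * W q else 0)"
    unfolding sum_subtractf[symmetric] using d by (intro sum.cong) (auto simp: algebra_simps)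
  then show ?thesis using eq[of 0] eq[of "d - 1"] d by (simp add: sum_distrib_left)
qed

lemma block_eigen_chain:
  fixes \<alpha> W :: "nat \<Rightarrow> real"
  assumes \<rho>: "0 < \<rho>" and d: "0 < d" and W: "\<And>q. q < d \<Longrightarrow> 0 \<le> W q"
    and eq: "\<And>p. p < d \<Longrightarrow> \<rho> * \<alpha> p = (\<Sum>q<d. (if p \<le> q then 1 else \<rho>) * W q)"
  shows "\<rho> \<le> 1 \<longrightarrow> \<rho> * \<alpha> 0 \<le> \<alpha> (d - 1) \<and> (\<forall>p. p + 1 < d \<longrightarrow> \<alpha> (p + 1) \<le> \<alpha> p)"
    and "\<rho> \<ge> 1 \<longrightarrow> \<alpha> (d - 1) \<le> \<rho> * \<alpha> 0 \<and> (\<forall>p. p + 1 < d \<longrightarrow> \<alpha> p \<le> \<alpha> (p + 1))"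
proof -
  have step: "\<rho> * \<alpha> (p + 1) = \<rho> * \<alpha> p + (\<rho> - 1) * W p" if "p + 1 < d" for p
    by (rule block_eigen_step[OF _ that]) (rule eq)
  have wrap: "\<rho> * \<alpha> (d - 1) = \<rho> * (\<rho> * \<alpha> 0) + (1 - \<rho>) * W (d - 1)"
    by (rule block_eigen_wrap[OF _ d]) (rule eq)
  show "\<rho> \<le> 1 \<longrightarrow> \<rho> * \<alpha> 0 \<le> \<alpha> (d - 1) \<and> (\<forall>p. p + 1 < d \<longrightarrow> \<alpha> (p + 1) \<le> \<alpha> p)"
  proof (intro impI conjI allI)
    assume le: "\<rho> \<le> 1"
    have "\<rho> * (\<rho> * \<alpha> 0) \<le> \<rho> * \<alpha> (d - 1)"
      using wrap le W[of "d - 1"] d by simp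
    then show "\<rho> * \<alpha> 0 \<le> \<alpha> (d - 1)" using \<rho> by simp
    fix p assume p: "p + 1 < d"
    have "\<rho> * \<alpha> (p + 1) \<le> \<rho> * \<alpha> p"
      using step[OF p] le W[of p] p by (simp add: mult_nonpos_nonneg)
    then show "\<alpha> (p + 1) \<le> \<alpha> p" using \<rho> by simp
  qed
  show "\<rho> \<ge> 1 \<longrightarrow> \<alpha> (d - 1) \<le> \<rho> * \<alpha> 0 \<and> (\<forall>p. p + 1 < d \<longrightarrow> \<alpha> p \<le> \<alpha> (p + 1))"
  proof (intro impI conjI allI)
    assume ge: "\<rho> \<ge> 1"
    have "\<rho> * \<alpha> (d - 1) \<le> \<rho> * (\<rho> * \<alpha> 0)"
      using wrap ge W[of "d - 1"] d by (simp add: mult_nonpos_nonneg)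
    then show "\<alpha> (d - 1) \<le> \<rho> * \<alpha> 0" using \<rho> by simp
    fix p assume p: "p + 1 < d"
    have "\<rho> * \<alpha> p \<le> \<rho> * \<alpha> (p + 1)"
      using step[OF p] ge W[of p] p by simp
    then show "\<alpha> p \<le> \<alpha> (p + 1)" using \<rho> by simp
  qed
qed

theorem lemma3p1:
  fixes n :: nat and BJ :: "real mat" and Bs :: "real mat list"
  assumes BJ_carrier: "BJ \<in> carrier_mat n n"
    and BJ_nonneg: "\<forall>i < n. \<forall>j < n. BJ $$ (i, j) \<ge> 0"
    and split: "is_splitting n BJ Bs"
    and pos: "rho (iter_mat n Bs) > 0"
  shows "\<exists>v. eigenvector (iter_mat n Bs) v (rho (iter_mat n Bs)) \<and>
           (\<forall>k < length Bs * n. v $ k \<ge> 0) \<and>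
           (rho (iter_mat n Bs) \<le> 1 \<longrightarrow>
              (\<forall>i < n. rho (iter_mat n Bs) * v $ i \<le> v $ ((length Bs - 1) * n + i) \<and>
                 (\<forall>p. p + 1 < length Bs \<longrightarrow> v $ ((p + 1) * n + i) \<le> v $ (p * n + i)))) \<and>
           (rho (iter_mat n Bs) \<ge> 1 \<longrightarrow>
              (\<forall>i < n. v $ ((length Bs - 1) * n + i) \<le> rho (iter_mat n Bs) * v $ i \<and>
                 (\<forall>p. p + 1 < length Bs \<longrightarrow> v $ (p * n + i) \<le> v $ ((p + 1) * n + i))))"
proof -
  let ?d = "length Bs" and ?T = "iter_mat n Bs" and ?\<rho> = "rho (iter_mat n Bs)"
  have n: "0 < n" using splitting_dim_pos[OF split] .
  have d: "0 < ?d" using split by (auto simp: is_splitting_def)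
  have Bs_nonneg: "\<And>q i j. q < ?d \<Longrightarrow> i < n \<Longrightarrow> j < n \<Longrightarrow> (Bs ! q) $$ (i,j) \<ge> 0"
    using splitting_nonneg[OF split BJ_nonneg] .
  obtain v where ev: "eigenvector ?T v ?\<rho>" and v_nonneg: "\<forall>k<?d * n. v $ k \<ge> 0"
    using nonneg_mat_perron_eigenvector[OF iter_mat_carrier _ iter_mat_nonneg[OF Bs_nonneg] pos] n d
    by auto
  then have v: "v \<in> carrier_vec (?d * n)" and Tv: "?T *\<^sub>v v = ?\<rho> \<cdot>\<^sub>v v"
    using iter_mat_carrier[of n Bs] by (auto simp: eigenvector_def)
  have W_nonneg: "block_mult_vec n Bs v q i \<ge> 0" if "q < ?d" "i < n" for q i
    unfolding block_mult_vec_def using that Bs_nonneg v_nonneg block_index_less[OF that(1)]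
    by (intro sum_nonneg mult_nonneg_nonneg) auto
  have "(?\<rho> \<le> 1 \<longrightarrow> ?\<rho> * v $ i \<le> v $ ((?d - 1) * n + i) \<and>
            (\<forall>p. p + 1 < ?d \<longrightarrow> v $ ((p + 1) * n + i) \<le> v $ (p * n + i))) \<and>
        (?\<rho> \<ge> 1 \<longrightarrow> v $ ((?d - 1) * n + i) \<le> ?\<rho> * v $ i \<and>
            (\<forall>p. p + 1 < ?d \<longrightarrow> v $ (p * n + i) \<le> v $ ((p + 1) * n + i)))" if i: "i < n" for i
    using block_eigen_chain[where \<alpha> = "\<lambda>p. v $ (p * n + i)" and W = "\<lambda>q. block_mult_vec n Bs v q i",
        OF pos d W_nonneg[OF _ i] iter_mat_eigen_blocks[OF Tv v _ i]]
    by simp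
  then show ?thesis using ev v_nonneg by blast
qed

end
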